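(* Assume $\mu(\partial A)=0$ for every $\sigma$-invariant probability measure $\mu$. Then $\lim_{m\to\infty}\rho(\mathcal{D}_m)=0$, where $\rho(\mathcal{D})=\sup_\mu\mu(\mathcal{D})$, the supremum being over all $\sigma$-invariant probability measures $\mu$.
   Context: $(\Sigma,\sigma)$ is a two-sided mixing subshift of finite type on $\{1,\dots,N\}$ with the product topology. $A\subset\Sigma$ is an open set, $\partial A=\overline A\cap\overline{\Sigma\setminus A}$. An $m$-cylinder is $\{x:x_j=i_j,\ -m\le j\le m\}$; $\mathcal{B}_m$ (resp. $\mathcal{C}_m$) is the largest (resp. smallest) union of $m$-cylinders contained in (resp. containing) $A$; $\mathcal{D}_m=\mathcal{C}_m\setminus\mathcal{B}_m$. *)

theory Defs
  imports "HOL-Probability.Probability"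
begin

text \<open>Points of the full shift are maps int \<Rightarrow> nat; the type carries the product
  topology of discrete nat (Function_Topology). A subshift of finite type is given by a
  0-1 transition matrix M on the alphabet {1..N}.\<close>

definition SFT :: "nat \<Rightarrow> (nat \<Rightarrow> nat \<Rightarrow> bool) \<Rightarrow> (int \<Rightarrow> nat) set" where
  "SFT N M = {x. \<forall>j. x j \<in> {1..N} \<and> M (x j) (x (j + 1))}"

definition shift :: "(int \<Rightarrow> nat) \<Rightarrow> (int \<Rightarrow> nat)" where
  "shift x = (\<lambda>j. x (j + 1))"

definition admissible_path :: "nat \<Rightarrow> (nat \<Rightarrow> nat \<Rightarrow> bool) \<Rightarrow> nat \<Rightarrow> nat \<Rightarrow> nat \<Rightarrow> bool" where
  "admissible_path N M n i j \<longleftrightarrow> (\<exists>w::nat \<Rightarrow> nat. w 0 = i \<and> w n = j \<and>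
      (\<forall>k\<le>n. w k \<in> {1..N}) \<and> (\<forall>k<n. M (w k) (w (Suc k))))"

text \<open>Mixing: M is primitive (some power has all entries positive from some point on).\<close>
definition mixing_SFT :: "nat \<Rightarrow> (nat \<Rightarrow> nat \<Rightarrow> bool) \<Rightarrow> bool" where
  "mixing_SFT N M \<longleftrightarrow> (\<exists>K. \<forall>n\<ge>K. \<forall>i\<in>{1..N}. \<forall>j\<in>{1..N}. admissible_path N M n i j)"

definition invariant_prob :: "(int \<Rightarrow> nat) set \<Rightarrow> (int \<Rightarrow> nat) measure set" where
  "invariant_prob S = {\<mu>. prob_space \<mu> \<and> space \<mu> = S \<and> sets \<mu> = sets (restrict_space borel S) \<and>
      shift \<in> measurable \<mu> \<mu> \<and>
      (\<forall>B\<in>sets \<mu>. emeasure \<mu> (shift -` B \<inter> space \<mu>) = emeasure \<mu> B)}"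

definition cylinder :: "(int \<Rightarrow> nat) set \<Rightarrow> nat \<Rightarrow> (int \<Rightarrow> nat) \<Rightarrow> (int \<Rightarrow> nat) set" where
  "cylinder S m w = {x\<in>S. \<forall>j. - int m \<le> j \<and> j \<le> int m \<longrightarrow> x j = w j}"

definition is_cylinder :: "(int \<Rightarrow> nat) set \<Rightarrow> nat \<Rightarrow> (int \<Rightarrow> nat) set \<Rightarrow> bool" where
  "is_cylinder S m C \<longleftrightarrow> (\<exists>w. C = cylinder S m w \<and> C \<noteq> {})"

definition inner_approx :: "(int \<Rightarrow> nat) set \<Rightarrow> (int \<Rightarrow> nat) set \<Rightarrow> nat \<Rightarrow> (int \<Rightarrow> nat) set" where
  "inner_approx S A m = \<Union>{C. is_cylinder S m C \<and> C \<subseteq> A}"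

definition outer_approx :: "(int \<Rightarrow> nat) set \<Rightarrow> (int \<Rightarrow> nat) set \<Rightarrow> nat \<Rightarrow> (int \<Rightarrow> nat) set" where
  "outer_approx S A m = \<Union>{C. is_cylinder S m C \<and> C \<inter> A \<noteq> {}}"

definition diff_approx :: "(int \<Rightarrow> nat) set \<Rightarrow> (int \<Rightarrow> nat) set \<Rightarrow> nat \<Rightarrow> (int \<Rightarrow> nat) set" where
  "diff_approx S A m = outer_approx S A m - inner_approx S A m"

definition topo_boundary :: "(int \<Rightarrow> nat) set \<Rightarrow> (int \<Rightarrow> nat) set \<Rightarrow> (int \<Rightarrow> nat) set" where
  "topo_boundary S A = (top_of_set S closure_of A) \<inter> (top_of_set S closure_of (S - A))"

definition rho :: "(int \<Rightarrow> nat) set \<Rightarrow> (int \<Rightarrow> nat) set \<Rightarrow> real" where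
  "rho S D = (SUP \<mu>\<in>invariant_prob S. measure \<mu> D)"

end

theory Submission
  imports Defs
begin

text \<open>The sets D_m are finite unions of m-cylinders, hence clopen, and they decrease to a
  subset of the boundary of A. If \<rho>(D_m) did not tend to 0, there would be invariant measures
  \<mu>_k with \<mu>_k(D_k) > \<epsilon>/2. A subsequence converges on every cylinder (Tychonoff); the limit is
  a finitely additive, shift-invariant content on the algebra generated by the cylinders, and
  it is even countably additive there, because by compactness of the shift space a decreasing
  sequence of clopen sets with empty intersection is eventually empty. Its Caratheodory
  extension \<nu> is an invariant probability measure with \<nu>(D_k) \<ge> \<epsilon>/2 for all k, so the boundary
  of A has \<nu>-measure at least \<epsilon>/2. Mixing only serves to produce a periodic point, so that
  \<rho> is a supremum over a nonempty set.\<close>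

section \<open>Windows and the cylinder algebra\<close>

definition window :: "nat \<Rightarrow> (int \<Rightarrow> nat) \<Rightarrow> nat list" where
  "window m x = map (\<lambda>i. x (int i - int m)) [0..<2*m+1]"

lemma window_eq_iff:
  "window m x = window m y \<longleftrightarrow> (\<forall>j. - int m \<le> j \<and> j \<le> int m \<longrightarrow> x j = y j)"
proof
  assume eq: "window m x = window m y"
  show "\<forall>j. - int m \<le> j \<and> j \<le> int m \<longrightarrow> x j = y j"
  proof (intro allI impI)
    fix j assume j: "- int m \<le> j \<and> j \<le> int m"
    have "nat (j + int m) \<in> set [0..<2*m+1]" using j by (simp del: upt_Suc) linarith
    then have "x (int (nat (j + int m)) - int m) = y (int (nat (j + int m)) - int m)"
      using eq unfolding window_def map_eq_conv by blast
    then show "x j = y j" using j by simp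
  qed
next
  assume "\<forall>j. - int m \<le> j \<and> j \<le> int m \<longrightarrow> x j = y j"
  then have "\<forall>i\<in>set [0..<2*m+1]. x (int i - int m) = y (int i - int m)"
    by (simp del: upt_Suc)
  then show "window m x = window m y" unfolding window_def map_eq_conv .
qed

lemma window_eq_antimono:
  assumes "m \<le> n" "window n x = window n y"
  shows "window m x = window m y"
  using assms unfolding window_eq_iff by force

lemma window_shift_eq:
  assumes "window (Suc m) x = window (Suc m) y"
  shows "window m (shift x) = window m (shift y)"
  using assms unfolding window_eq_iff shift_def by force

definition determined_by_window :: "(int \<Rightarrow> nat) set \<Rightarrow> nat \<Rightarrow> (int \<Rightarrow> nat) set \<Rightarrow> bool" where
  "determined_by_window S m B \<longleftrightarrow>
     B \<subseteq> S \<and> (\<forall>x\<in>S. \<forall>y\<in>S. window m x = window m y \<longrightarrow> x \<in> B \<longrightarrow> y \<in> B)"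

definition cylinder_sets :: "(int \<Rightarrow> nat) set \<Rightarrow> (int \<Rightarrow> nat) set set" where
  "cylinder_sets S = {B. \<exists>m. determined_by_window S m B}"

lemma determined_by_windowI:
  assumes "B \<subseteq> S"
    and "\<And>x y. x \<in> S \<Longrightarrow> y \<in> S \<Longrightarrow> window m x = window m y \<Longrightarrow> x \<in> B \<Longrightarrow> y \<in> B"
  shows "determined_by_window S m B"
  unfolding determined_by_window_def
proof (intro conjI ballI impI)
  fix x y assume "x \<in> S" "y \<in> S" "window m x = window m y" "x \<in> B"
  then show "y \<in> B" by (rule assms(2))
qed (rule assms(1))

lemma determined_by_windowD:
  "determined_by_window S m B \<Longrightarrow> x \<in> S \<Longrightarrow> y \<in> S \<Longrightarrow> window m x = window m y \<Longrightarrow>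
    x \<in> B \<Longrightarrow> y \<in> B"
  unfolding determined_by_window_def by blast

lemma determined_by_window_subset: "determined_by_window S m B \<Longrightarrow> B \<subseteq> S"
  unfolding determined_by_window_def by (elim conjE)

lemma determined_by_window_mono:
  assumes "determined_by_window S m B" "m \<le> n"
  shows "determined_by_window S n B"
proof (rule determined_by_windowI)
  show "B \<subseteq> S" using assms(1) by (rule determined_by_window_subset)
  fix x y assume "x \<in> S" "y \<in> S" "window n x = window n y" "x \<in> B"
  then show "y \<in> B"
    using determined_by_windowD[OF assms(1)] window_eq_antimono[OF assms(2)] by blast
qed

lemma determined_by_window_Diff:
  assumes "determined_by_window S m A" "determined_by_window S m B"
  shows "determined_by_window S m (A - B)"
proof (rule determined_by_windowI)
  show "A - B \<subseteq> S" using determined_by_window_subset[OF assms(1)] by blast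
  fix x y assume xy: "x \<in> S" "y \<in> S" "window m x = window m y" "x \<in> A - B"
  have "y \<in> A" using determined_by_windowD[OF assms(1) xy(1-3)] xy(4) by blast
  moreover have "y \<notin> B"
    using determined_by_windowD[OF assms(2) xy(2,1) xy(3)[symmetric]] xy(4) by blast
  ultimately show "y \<in> A - B" by blast
qed

lemma determined_by_window_Un:
  assumes "determined_by_window S m A" "determined_by_window S m B"
  shows "determined_by_window S m (A \<union> B)"
proof (rule determined_by_windowI)
  show "A \<union> B \<subseteq> S" using assms by (simp add: determined_by_window_subset)
  fix x y assume "x \<in> S" "y \<in> S" "window m x = window m y" "x \<in> A \<union> B"
  then show "y \<in> A \<union> B"
    using determined_by_windowD[OF assms(1)] determined_by_windowD[OF assms(2)] by blast
qed

lemma determined_by_window_space: "determined_by_window S m S"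
  unfolding determined_by_window_def by blast

lemma cylinder_sets_common_window:
  assumes "A \<in> cylinder_sets S" "B \<in> cylinder_sets S"
  obtains m where "determined_by_window S m A" "determined_by_window S m B"
proof -
  obtain k l where "determined_by_window S k A" "determined_by_window S l B"
    using assms unfolding cylinder_sets_def by blast
  then show thesis
    using that determined_by_window_mono[of S _ _ "max k l"] by (meson max.cobounded1 max.cobounded2)
qed

lemma cylinder_sets_Diff:
  assumes "A \<in> cylinder_sets S" "B \<in> cylinder_sets S"
  shows "A - B \<in> cylinder_sets S"
proof -
  obtain m where "determined_by_window S m A" "determined_by_window S m B"
    using assms by (rule cylinder_sets_common_window)
  then show ?thesis unfolding cylinder_sets_def by (blast intro: determined_by_window_Diff)
qed

lemma cylinder_sets_Un:
  assumes "A \<in> cylinder_sets S" "B \<in> cylinder_sets S"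
  shows "A \<union> B \<in> cylinder_sets S"
proof -
  obtain m where "determined_by_window S m A" "determined_by_window S m B"
    using assms by (rule cylinder_sets_common_window)
  then show ?thesis unfolding cylinder_sets_def by (blast intro: determined_by_window_Un)
qed

lemma space_in_cylinder_sets: "S \<in> cylinder_sets S"
  unfolding cylinder_sets_def using determined_by_window_space by blast

lemma cylinder_sets_subset_Pow: "cylinder_sets S \<subseteq> Pow S"
  unfolding cylinder_sets_def using determined_by_window_subset by blast

lemma algebra_cylinder_sets: "algebra S (cylinder_sets S)"
proof (rule algebra_iff_Un[THEN iffD2], intro conjI ballI)
  show "cylinder_sets S \<subseteq> Pow S" by (rule cylinder_sets_subset_Pow)
  show "{} \<in> cylinder_sets S"
    using cylinder_sets_Diff[OF space_in_cylinder_sets space_in_cylinder_sets] by simp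
qed (simp_all add: cylinder_sets_Diff cylinder_sets_Un space_in_cylinder_sets)

lemma Int_stable_cylinder_sets: "Int_stable (cylinder_sets S)"
  by (rule algebra.Int_stable[OF algebra_cylinder_sets])

section \<open>Topology of the shift space\<close>

lemma open_coordinates_fixed:
  assumes "finite J"
  shows "open {y :: int \<Rightarrow> nat. \<forall>j\<in>J. y j = c j}"
proof -
  have "\<And>j. open {(c :: int \<Rightarrow> nat) j}" by (rule discrete_topology_class.open_discrete)
  from product_topology_basis'[of J "\<lambda>j. {c j}" id, OF assms this] show ?thesis by simp
qed

lemma open_window_class: "open {y. window m y = window m x}"
proof -
  have "{y. window m y = window m x} = {y. \<forall>j\<in>{- int m..int m}. y j = x j}"
    unfolding window_eq_iff by auto
  then show ?thesis using open_coordinates_fixed[of "{- int m..int m}" x] by simp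
qed

lemma open_contains_window_class:
  fixes U :: "(int \<Rightarrow> nat) set"
  assumes "open U" "x \<in> U"
  shows "\<exists>m. \<forall>y. window m y = window m x \<longrightarrow> y \<in> U"
proof -
  have "openin (product_topology (\<lambda>i. euclidean) UNIV) U" using assms(1) unfolding open_fun_def .
  from product_topology_open_contains_basis[OF this assms(2)]
  obtain X where X: "x \<in> (\<Pi>\<^sub>E i\<in>UNIV. X i)" "finite {i. X i \<noteq> UNIV}" "(\<Pi>\<^sub>E i\<in>UNIV. X i) \<subseteq> U"
    by auto
  define J where "J = {i. X i \<noteq> UNIV}"
  define m where "m = nat (Max (insert 0 (abs ` J)))"
  have J_bound: "\<bar>j\<bar> \<le> int m" if "j \<in> J" for j
  proof -
    have "\<bar>j\<bar> \<le> Max (insert 0 (abs ` J))" using X(2) that unfolding J_def by (intro Max_ge) auto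
    then show ?thesis unfolding m_def by linarith
  qed
  show ?thesis
  proof (intro exI allI impI)
    fix y assume "window m y = window m x"
    then have "y i = x i" if "i \<in> J" for i
      using J_bound[OF that] unfolding window_eq_iff by (simp add: abs_le_iff)
    then have "y i \<in> X i" for i
      using X(1) unfolding J_def by (cases "X i = UNIV") (auto simp: PiE_iff)
    then have "y \<in> (\<Pi>\<^sub>E i\<in>UNIV. X i)" by (simp add: PiE_iff)
    then show "y \<in> U" using X(3) by blast
  qed
qed

lemma determined_by_window_open:
  assumes "determined_by_window S m B"
  obtains U where "open U" "B = S \<inter> U"
proof
  let ?U = "\<Union>x\<in>B. {y. window m y = window m x}"
  show "open ?U" by (intro open_UN ballI open_window_class)
  show "B = S \<inter> ?U"
  proof
    show "B \<subseteq> S \<inter> ?U" using determined_by_window_subset[OF assms] by blast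
    show "S \<inter> ?U \<subseteq> B"
    proof
      fix y assume "y \<in> S \<inter> ?U"
      then obtain x where "x \<in> B" "y \<in> S" "window m y = window m x" by blast
      moreover have "x \<in> S" using determined_by_window_subset[OF assms] \<open>x \<in> B\<close> by blast
      ultimately show "y \<in> B" using determined_by_windowD[OF assms, of x y] by simp
    qed
  qed
qed

lemma cylinder_sets_in_borel:
  assumes "B \<in> cylinder_sets S"
  shows "B \<in> sets (restrict_space borel S)"
proof -
  obtain m where "determined_by_window S m B" using assms unfolding cylinder_sets_def by blast
  then obtain U where "open U" "B = S \<inter> U" by (rule determined_by_window_open)
  then show ?thesis unfolding sets_restrict_space by auto
qed

lemma determined_by_window_closed:
  assumes "determined_by_window S m B" "closed S"
  shows "closed B"
proof -
  obtain U where "open U" "S - B = S \<inter> U"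
    using determined_by_window_Diff[OF determined_by_window_space assms(1)]
    by (rule determined_by_window_open)
  then have "B = S \<inter> - U" using determined_by_window_subset[OF assms(1)] by blast
  then show ?thesis using assms(2) \<open>open U\<close> by (simp add: closed_Int open_closed)
qed

lemma sigma_sets_cylinder_sets: "sigma_sets S (cylinder_sets S) = sets (restrict_space borel S)"
proof
  show "sigma_sets S (cylinder_sets S) \<subseteq> sets (restrict_space borel S)"
    using sets.sigma_sets_subset[of "cylinder_sets S" "restrict_space borel S"] cylinder_sets_in_borel
    by (simp add: space_restrict_space subset_eq)
next
  show "sets (restrict_space borel S) \<subseteq> sigma_sets S (cylinder_sets S)"
  proof
    fix Z assume "Z \<in> sets (restrict_space borel S)"
    then obtain X where X: "X \<in> sigma_sets UNIV (Collect open)" "Z = S \<inter> X"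
      unfolding sets_restrict_space sets_borel by auto
    have "S \<inter> X \<in> sigma_sets S (cylinder_sets S)" using X(1)
    proof (induct rule: sigma_sets.induct)
      case (Basic a)
      then have oa: "open a" by simp
      define G where "G m = {x\<in>S. \<forall>y\<in>S. window m x = window m y \<longrightarrow> y \<in> a}" for m
      have "G m \<in> cylinder_sets S" for m
      proof -
        have "determined_by_window S m (G m)" unfolding determined_by_window_def G_def by auto
        then show ?thesis unfolding cylinder_sets_def by blast
      qed
      moreover have "S \<inter> a = (\<Union>m. G m)"
      proof
        show "(\<Union>m. G m) \<subseteq> S \<inter> a" unfolding G_def by blast
        show "S \<inter> a \<subseteq> (\<Union>m. G m)"
        proof
          fix x assume x: "x \<in> S \<inter> a"
          then obtain m where "\<forall>y. window m y = window m x \<longrightarrow> y \<in> a"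
            using open_contains_window_class[OF oa] by blast
          then have "x \<in> G m" using x unfolding G_def by auto
          then show "x \<in> (\<Union>m. G m)" by blast
        qed
      qed
      ultimately show ?case by (metis range_subsetD sigma_sets.Basic sigma_sets.Union subsetI)
    next
      case Empty then show ?case by (simp add: sigma_sets.Empty)
    next
      case (Compl a)
      have "S \<inter> (UNIV - a) = S - (S \<inter> a)" by blast
      then show ?case using Compl by (simp add: sigma_sets.Compl)
    next
      case (Union a)
      have eq: "S \<inter> (\<Union>i. a i) = (\<Union>i. S \<inter> a i)" by blast
      have "(\<Union>i. S \<inter> a i) \<in> sigma_sets S (cylinder_sets S)"
        by (intro sigma_sets.Union) (rule Union(2))
      then show ?case unfolding eq .
    qed
    then show "Z \<in> sigma_sets S (cylinder_sets S)" using X(2) by simp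
  qed
qed

lemma compact_decseq_cylinder_sets_eventually_empty:
  assumes "compact S" "closed S" "range B \<subseteq> cylinder_sets S" "decseq B" "(\<Inter>i. B i) = {}"
  obtains n where "B n = {}"
proof -
  have closed: "closed (B i)" for i
  proof -
    obtain m where "determined_by_window S m (B i)"
      using assms(3) unfolding cylinder_sets_def by blast
    then show ?thesis using assms(2) by (rule determined_by_window_closed)
  qed
  have "S \<subseteq> (\<Union>i. - B i)" using assms(5) by blast
  moreover have "open (- B i)" for i using closed by (simp add: open_Compl)
  ultimately obtain C where C: "finite C" "S \<subseteq> (\<Union>i\<in>C. - B i)"
    using assms(1) by (meson compactE_image)
  obtain n where n: "\<forall>i\<in>C. i \<le> n" using C(1) finite_nat_set_iff_bounded_le by blast
  have "B n \<subseteq> S" using assms(3) cylinder_sets_subset_Pow by blast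
  moreover have "B n \<subseteq> B i" if "i \<in> C" for i using assms(4) n that by (simp add: decseq_def)
  ultimately show thesis using C(2) that by blast
qed

lemma open_adjacent_symbols: "open {x :: int \<Rightarrow> nat. P (x j) (x (j + 1))}"
proof -
  let ?C = "\<lambda>p :: nat \<times> nat. {x :: int \<Rightarrow> nat. \<forall>i\<in>{j, j + 1}. x i = (if i = j then fst p else snd p)}"
  have "{x :: int \<Rightarrow> nat. P (x j) (x (j + 1))} = (\<Union>p\<in>{p. P (fst p) (snd p)}. ?C p)"
    by auto
  moreover have "open (?C p)" for p by (rule open_coordinates_fixed) simp
  ultimately show ?thesis by (metis (no_types, lifting) open_UN)
qed

lemma closed_SFT: "closed (SFT N M)"
proof -
  have "SFT N M = (\<Inter>j. - {x. \<not> (x j \<in> {1..N} \<and> M (x j) (x (j + 1)))})"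
    unfolding SFT_def by auto
  moreover have "closed (- {x. \<not> (x j \<in> {1..N} \<and> M (x j) (x (j + 1)))})" for j :: int
    using open_adjacent_symbols[of "\<lambda>a b. \<not> (a \<in> {1..N} \<and> M a b)" j] by (rule closed_Compl)
  ultimately show ?thesis by (simp add: closed_INT)
qed

lemma compact_SFT: "compact (SFT N M)"
proof -
  have "compactin (product_topology (\<lambda>i. euclidean) UNIV) (PiE UNIV (\<lambda>i :: int. {1..N :: nat}))"
    by (simp add: compactin_PiE finite_imp_compact)
  then have "compact (PiE UNIV (\<lambda>i :: int. {1..N :: nat}))"
    by (simp add: euclidean_product_topology)
  then have "compact (PiE UNIV (\<lambda>i :: int. {1..N :: nat}) \<inter> SFT N M)"
    using closed_SFT by (rule compact_Int_closed)
  moreover have "PiE UNIV (\<lambda>i :: int. {1..N :: nat}) \<inter> SFT N M = SFT N M"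
    unfolding SFT_def by (auto simp: PiE_iff)
  ultimately show ?thesis by simp
qed

lemma shift_in_SFT:
  assumes "x \<in> SFT N M"
  shows "shift x \<in> SFT N M"
proof -
  have "\<forall>j. x j \<in> {1..N} \<and> M (x j) (x (j + 1))" using assms unfolding SFT_def by blast
  then have "\<forall>j. x (j + 1) \<in> {1..N} \<and> M (x (j + 1)) (x (j + 1 + 1))" by blast
  then show ?thesis unfolding SFT_def shift_def by simp
qed

lemma finite_windows_SFT: "finite (window m ` SFT N M)"
proof (rule finite_subset)
  show "window m ` SFT N M \<subseteq> {w. set w \<subseteq> {1..N} \<and> length w = 2*m+1}"
    unfolding SFT_def window_def by auto
  show "finite {w. set w \<subseteq> {1..N :: nat} \<and> length w = 2*m+1}"
    by (rule finite_lists_length_eq) simp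
qed

lemma measurable_shift_restrict_space:
  assumes "shift \<in> S \<rightarrow> S"
  shows "shift \<in> measurable (restrict_space borel S) (restrict_space borel S)"
proof (rule measurable_restrict_space3[OF _ assms])
  have "continuous_on UNIV shift"
    unfolding shift_def
    by (intro continuous_on_coordinatewise_then_product continuous_on_product_coordinates)
  then show "shift \<in> borel_measurable borel" by (rule borel_measurable_continuous_onI)
qed

lemma determined_by_window_shift_vimage:
  assumes "determined_by_window S m B" "shift \<in> S \<rightarrow> S"
  shows "determined_by_window S (Suc m) (shift -` B \<inter> S)"
proof (rule determined_by_windowI)
  fix x y assume "x \<in> S" "y \<in> S" "window (Suc m) x = window (Suc m) y" "x \<in> shift -` B \<inter> S"
  then show "y \<in> shift -` B \<inter> S"
    using determined_by_windowD[OF assms(1)] window_shift_eq assms(2) by blast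
qed blast

lemma cylinder_sets_shift_vimage:
  "B \<in> cylinder_sets S \<Longrightarrow> shift \<in> S \<rightarrow> S \<Longrightarrow> shift -` B \<inter> S \<in> cylinder_sets S"
  unfolding cylinder_sets_def using determined_by_window_shift_vimage by blast

section \<open>Limits of invariant measures\<close>

definition window_class :: "(int \<Rightarrow> nat) set \<Rightarrow> nat \<Rightarrow> nat list \<Rightarrow> (int \<Rightarrow> nat) set" where
  "window_class S m w = {x\<in>S. window m x = w}"

lemma window_class_in_cylinder_sets: "window_class S m w \<in> cylinder_sets S"
proof -
  have "determined_by_window S m (window_class S m w)"
    unfolding determined_by_window_def window_class_def by auto
  then show ?thesis unfolding cylinder_sets_def by blast
qed

lemma determined_by_window_eq_Union_window_classes:
  assumes "determined_by_window S m B"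
  shows "B = (\<Union>w\<in>window m ` B. window_class S m w)"
proof
  show "B \<subseteq> (\<Union>w\<in>window m ` B. window_class S m w)"
    using determined_by_window_subset[OF assms] unfolding window_class_def by blast
  show "(\<Union>w\<in>window m ` B. window_class S m w) \<subseteq> B"
  proof
    fix y assume "y \<in> (\<Union>w\<in>window m ` B. window_class S m w)"
    then obtain x where x: "x \<in> B" "y \<in> S" "window m y = window m x"
      unfolding window_class_def by auto
    moreover have "x \<in> S" using determined_by_window_subset[OF assms] x(1) by blast
    ultimately show "y \<in> B" using determined_by_windowD[OF assms, of x y] by simp
  qed
qed

lemma measure_eq_sum_window_classes:
  assumes "finite_measure \<mu>" "sets \<mu> = sets (restrict_space borel (SFT N M))"
    and "determined_by_window (SFT N M) m B"
  shows "measure \<mu> B = (\<Sum>w\<in>window m ` B. measure \<mu> (window_class (SFT N M) m w))"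
proof -
  interpret finite_measure \<mu> by (rule assms(1))
  have "finite (window m ` B)"
    using finite_windows_SFT determined_by_window_subset[OF assms(3)]
    by (meson finite_subset image_mono)
  moreover have "window_class (SFT N M) m w \<in> sets \<mu>" for w
    using assms(2) cylinder_sets_in_borel[OF window_class_in_cylinder_sets] by simp
  moreover have "disjoint_family_on (window_class (SFT N M) m) (window m ` B)"
    unfolding disjoint_family_on_def window_class_def by auto
  ultimately have "measure \<mu> (\<Union>w\<in>window m ` B. window_class (SFT N M) m w)
      = (\<Sum>w\<in>window m ` B. measure \<mu> (window_class (SFT N M) m w))"
    by (intro finite_measure_finite_Union) auto
  then show ?thesis using determined_by_window_eq_Union_window_classes[OF assms(3)] by simp
qed

text \<open>The values on the countably many window classes form a point of the compact cube
  [0,1]^(nat \<times> nat list), and every cylinder set is a finite disjoint union of window classes.\<close>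
lemma convergent_subseq_on_cylinder_sets:
  fixes \<mu> :: "nat \<Rightarrow> (int \<Rightarrow> nat) measure"
  assumes "\<And>n. prob_space (\<mu> n)" "\<And>n. sets (\<mu> n) = sets (restrict_space borel (SFT N M))"
  obtains r :: "nat \<Rightarrow> nat" where "strict_mono r"
    "\<And>B. B \<in> cylinder_sets (SFT N M) \<Longrightarrow> convergent (\<lambda>j. measure (\<mu> (r j)) B)"
proof -
  define v where
    "v n = (\<lambda>p :: nat \<times> nat list. measure (\<mu> n) (window_class (SFT N M) (fst p) (snd p)))" for n
  define K where "K = PiE UNIV (\<lambda>_ :: nat \<times> nat list. {0..1 :: real})"
  have "compactin (product_topology (\<lambda>i. euclidean) UNIV) K"
    unfolding K_def by (simp add: compactin_PiE)
  then have "seq_compact K"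
    by (simp add: euclidean_product_topology compact_imp_seq_compact)
  moreover have "\<forall>n. v n \<in> K"
  proof
    fix n
    interpret prob_space "\<mu> n" by (rule assms(1))
    show "v n \<in> K" unfolding K_def v_def by (auto simp: PiE_iff)
  qed
  ultimately obtain l r where "l \<in> K" and r: "strict_mono r" "(v \<circ> r) \<longlonglongrightarrow> l"
    by (rule seq_compactE)
  have coordinate: "(\<lambda>j. v (r j) p) \<longlonglongrightarrow> l p" for p
  proof -
    have "((\<lambda>j. (\<lambda>x. x p) ((v \<circ> r) j)) \<longlongrightarrow> (\<lambda>x. x p) l) sequentially"
      by (rule continuous_on_tendsto_compose[OF continuous_on_product_coordinates r(2)]) simp_all
    then show ?thesis by simp
  qed
  show thesis
  proof (rule that[OF r(1)])
    fix B assume "B \<in> cylinder_sets (SFT N M)"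
    then obtain m where m: "determined_by_window (SFT N M) m B" unfolding cylinder_sets_def by blast
    have "measure (\<mu> (r j)) B = (\<Sum>w\<in>window m ` B. v (r j) (m, w))" for j
      unfolding v_def using measure_eq_sum_window_classes[OF _ assms(2) m] assms(1)
      by (simp add: prob_space_def)
    moreover have "(\<lambda>j. \<Sum>w\<in>window m ` B. v (r j) (m, w)) \<longlonglongrightarrow> (\<Sum>w\<in>window m ` B. l (m, w))"
      by (intro tendsto_sum coordinate)
    ultimately show "convergent (\<lambda>j. measure (\<mu> (r j)) B)" unfolding convergent_def by auto
  qed
qed

lemma cylinder_content_extends_to_prob:
  fixes L :: "(int \<Rightarrow> nat) set \<Rightarrow> real"
  assumes nonneg: "\<And>B. B \<in> cylinder_sets (SFT N M) \<Longrightarrow> 0 \<le> L B"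
    and total: "L (SFT N M) = 1"
    and additive: "\<And>A B. A \<in> cylinder_sets (SFT N M) \<Longrightarrow> B \<in> cylinder_sets (SFT N M) \<Longrightarrow>
      A \<inter> B = {} \<Longrightarrow> L (A \<union> B) = L A + L B"
  obtains \<nu> where "prob_space \<nu>" "space \<nu> = SFT N M"
    "sets \<nu> = sets (restrict_space borel (SFT N M))"
    "\<And>B. B \<in> cylinder_sets (SFT N M) \<Longrightarrow> measure \<nu> B = L B"
proof -
  define S where "S = SFT N M"
  interpret algebra S "cylinder_sets S" by (rule algebra_cylinder_sets)
  have "L {} = L {} + L {}" using additive[of "{}" "{}"] empty_sets unfolding S_def by simp
  then have L_empty: "L {} = 0" by simp
  define f where "f B = ennreal (L B)" for B
  have "positive (cylinder_sets S) f" unfolding positive_def f_def L_empty by simp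
  moreover have "additive (cylinder_sets S) f"
    unfolding additive_def f_def using additive nonneg unfolding S_def by (simp add: ennreal_plus)
  moreover have "\<And>B. B \<in> cylinder_sets S \<Longrightarrow> f B \<noteq> \<infinity>" unfolding f_def by simp
  moreover have "(\<lambda>i. f (B i)) \<longlonglongrightarrow> 0"
    if B: "range B \<subseteq> cylinder_sets S" "decseq B" "(\<Inter>i. B i) = {}" for B
  proof -
    obtain n where "B n = {}"
      using compact_decseq_cylinder_sets_eventually_empty[OF compact_SFT closed_SFT] B
      unfolding S_def by blast
    then have "\<forall>i\<ge>n. B i = {}" using B(2) by (auto simp: decseq_def)
    then have "eventually (\<lambda>i. f (B i) = 0) sequentially"
      unfolding f_def using L_empty by (intro eventually_sequentiallyI[of n]) auto
    then show ?thesis by (rule tendsto_eventually)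
  qed
  ultimately obtain \<mu>' where \<mu>': "\<forall>B\<in>cylinder_sets S. \<mu>' B = f B"
    "measure_space S (sigma_sets S (cylinder_sets S)) \<mu>'"
    using caratheodory_empty_continuous by blast
  define \<nu> where "\<nu> = measure_of S (sigma_sets S (cylinder_sets S)) \<mu>'"
  have sigma: "sigma_algebra S (sigma_sets S (cylinder_sets S))"
    by (rule sigma_algebra_sigma_sets[OF cylinder_sets_subset_Pow])
  have space: "space \<nu> = S" unfolding \<nu>_def by (rule sigma_algebra.space_measure_of_eq[OF sigma])
  have sets: "sets \<nu> = sigma_sets S (cylinder_sets S)"
    unfolding \<nu>_def by (rule sigma_algebra.sets_measure_of_eq[OF sigma])
  have emeasure: "emeasure \<nu> B = ennreal (L B)" if "B \<in> cylinder_sets S" for B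
  proof -
    have "emeasure \<nu> B = \<mu>' B"
      unfolding \<nu>_def using \<mu>'(2) that
      by (intro emeasure_measure_of_sigma) (auto simp: measure_space_def)
    then show ?thesis using \<mu>'(1) that unfolding f_def by simp
  qed
  show thesis
  proof
    show "prob_space \<nu>"
      by (rule prob_spaceI) (simp add: space emeasure[OF space_in_cylinder_sets] total[folded S_def])
    show "space \<nu> = SFT N M" using space unfolding S_def .
    show "sets \<nu> = sets (restrict_space borel (SFT N M))"
      using sets sigma_sets_cylinder_sets unfolding S_def by simp
    fix B assume "B \<in> cylinder_sets (SFT N M)"
    then show "measure \<nu> B = L B"
      using emeasure nonneg unfolding S_def measure_def by simp
  qed
qed

lemma invariant_probD:
  assumes "\<mu> \<in> invariant_prob S"
  shows "prob_space \<mu>" "space \<mu> = S" "sets \<mu> = sets (restrict_space borel S)"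
    "B \<in> sets \<mu> \<Longrightarrow> emeasure \<mu> (shift -` B \<inter> space \<mu>) = emeasure \<mu> B"
  using assms unfolding invariant_prob_def by auto

lemma finite_measure_invariant_prob: "\<mu> \<in> invariant_prob S \<Longrightarrow> finite_measure \<mu>"
  using invariant_probD(1) by (simp add: prob_space_def)

lemma invariant_probI_cylinder_sets:
  assumes prob: "prob_space \<nu>" and space: "space \<nu> = S"
    and sets: "sets \<nu> = sets (restrict_space borel S)" and shift: "shift \<in> S \<rightarrow> S"
    and invariant: "\<And>B. B \<in> cylinder_sets S \<Longrightarrow> measure \<nu> (shift -` B \<inter> S) = measure \<nu> B"
  shows "\<nu> \<in> invariant_prob S"
proof -
  interpret prob_space \<nu> by (rule prob)
  have measurable: "shift \<in> measurable \<nu> \<nu>"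
    using measurable_shift_restrict_space[OF shift] measurable_cong_sets[OF sets sets] by simp
  have generated: "sets \<nu> = sigma_sets S (cylinder_sets S)"
    using sets sigma_sets_cylinder_sets by simp
  have "distr \<nu> \<nu> shift = \<nu>"
  proof (rule measure_eqI_generator_eq[OF Int_stable_cylinder_sets cylinder_sets_subset_Pow])
    fix X assume "X \<in> cylinder_sets S"
    moreover have "Y \<in> sets \<nu>" if "Y \<in> cylinder_sets S" for Y
      using that sets cylinder_sets_in_borel by simp
    ultimately show "emeasure (distr \<nu> \<nu> shift) X = emeasure \<nu> X"
      using emeasure_distr[OF measurable] invariant cylinder_sets_shift_vimage[OF _ shift] space
      by (simp add: emeasure_eq_measure)
  next
    show "range (\<lambda>_. S) \<subseteq> cylinder_sets S" using space_in_cylinder_sets by blast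
  qed (use generated finite_measure.emeasure_finite[OF finite_measure_distr[OF measurable]] in
        \<open>simp_all add: space\<close>)
  then have "emeasure \<nu> (shift -` B \<inter> space \<nu>) = emeasure \<nu> B" if "B \<in> sets \<nu>" for B
    using emeasure_distr[OF measurable that] by simp
  then show ?thesis
    unfolding invariant_prob_def using prob space sets measurable by blast
qed

lemma invariant_prob_cylinder_limit:
  fixes \<mu> :: "nat \<Rightarrow> (int \<Rightarrow> nat) measure"
  assumes \<mu>: "\<And>n. \<mu> n \<in> invariant_prob (SFT N M)"
    and L: "\<And>B. B \<in> cylinder_sets (SFT N M) \<Longrightarrow> (\<lambda>n. measure (\<mu> n) B) \<longlonglongrightarrow> L B"
  obtains \<nu> where "\<nu> \<in> invariant_prob (SFT N M)"
    "\<And>B. B \<in> cylinder_sets (SFT N M) \<Longrightarrow> measure \<nu> B = L B"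
proof -
  note \<mu>_props = invariant_probD[OF \<mu>]
  have in_sets: "B \<in> sets (\<mu> n)" if "B \<in> cylinder_sets (SFT N M)" for B n
    using cylinder_sets_in_borel[OF that] \<mu>_props(3) by simp
  have nonneg: "0 \<le> L B" if "B \<in> cylinder_sets (SFT N M)" for B
    by (rule LIMSEQ_le_const[OF L[OF that]]) simp
  have total: "L (SFT N M) = 1"
  proof -
    have "(\<lambda>n. measure (\<mu> n) (SFT N M)) \<longlonglongrightarrow> 1"
      using prob_space.prob_space[OF \<mu>_props(1)] \<mu>_props(2) by simp
    then show ?thesis using L[OF space_in_cylinder_sets] LIMSEQ_unique by blast
  qed
  have additive: "L (A \<union> B) = L A + L B"
    if AB: "A \<in> cylinder_sets (SFT N M)" "B \<in> cylinder_sets (SFT N M)" "A \<inter> B = {}" for A B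
  proof -
    have "measure (\<mu> n) (A \<union> B) = measure (\<mu> n) A + measure (\<mu> n) B" for n
    proof -
      interpret prob_space "\<mu> n" by (rule \<mu>_props(1))
      show ?thesis by (rule finite_measure_Union[OF in_sets[OF AB(1)] in_sets[OF AB(2)] AB(3)])
    qed
    then have "(\<lambda>n. measure (\<mu> n) (A \<union> B)) \<longlonglongrightarrow> L A + L B"
      using tendsto_add[OF L[OF AB(1)] L[OF AB(2)]] by simp
    then show ?thesis using L[OF cylinder_sets_Un[OF AB(1,2)]] LIMSEQ_unique by blast
  qed
  obtain \<nu> where \<nu>: "prob_space \<nu>" "space \<nu> = SFT N M"
    "sets \<nu> = sets (restrict_space borel (SFT N M))"
    "\<And>B. B \<in> cylinder_sets (SFT N M) \<Longrightarrow> measure \<nu> B = L B"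
    using cylinder_content_extends_to_prob[OF nonneg total additive] by blast
  have shift: "shift \<in> SFT N M \<rightarrow> SFT N M" using shift_in_SFT by blast
  have "measure \<nu> (shift -` B \<inter> SFT N M) = measure \<nu> B" if B: "B \<in> cylinder_sets (SFT N M)" for B
  proof -
    have B': "shift -` B \<inter> SFT N M \<in> cylinder_sets (SFT N M)"
      by (rule cylinder_sets_shift_vimage[OF B shift])
    have "measure (\<mu> n) (shift -` B \<inter> SFT N M) = measure (\<mu> n) B" for n
      using \<mu>_props(4)[OF in_sets[OF B], of n] \<mu>_props(2) unfolding measure_def by simp
    then have "(\<lambda>n. measure (\<mu> n) (shift -` B \<inter> SFT N M)) \<longlonglongrightarrow> L B" using L[OF B] by simp
    then have "L (shift -` B \<inter> SFT N M) = L B" using L[OF B'] LIMSEQ_unique by blast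
    then show ?thesis using \<nu>(4)[OF B] \<nu>(4)[OF B'] by simp
  qed
  then have "\<nu> \<in> invariant_prob (SFT N M)" by (rule invariant_probI_cylinder_sets[OF \<nu>(1-3) shift])
  then show thesis using that \<nu>(4) by blast
qed

lemma invariant_prob_limit_point:
  fixes \<mu> :: "nat \<Rightarrow> (int \<Rightarrow> nat) measure"
  assumes \<mu>: "\<And>n. \<mu> n \<in> invariant_prob (SFT N M)"
  obtains r :: "nat \<Rightarrow> nat" and \<nu> where "strict_mono r" "\<nu> \<in> invariant_prob (SFT N M)"
    "\<And>B. B \<in> cylinder_sets (SFT N M) \<Longrightarrow> (\<lambda>j. measure (\<mu> (r j)) B) \<longlonglongrightarrow> measure \<nu> B"
proof -
  obtain r :: "nat \<Rightarrow> nat" where r: "strict_mono r"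
    "\<And>B. B \<in> cylinder_sets (SFT N M) \<Longrightarrow> convergent (\<lambda>j. measure (\<mu> (r j)) B)"
    using convergent_subseq_on_cylinder_sets[of \<mu>, OF invariant_probD(1,3)[OF \<mu>]] by metis
  define L where "L B = lim (\<lambda>j. measure (\<mu> (r j)) B)" for B
  have L: "(\<lambda>j. measure ((\<mu> \<circ> r) j) B) \<longlonglongrightarrow> L B" if "B \<in> cylinder_sets (SFT N M)" for B
    unfolding L_def using r(2)[OF that] by (simp add: convergent_LIMSEQ_iff)
  have "(\<mu> \<circ> r) j \<in> invariant_prob (SFT N M)" for j using \<mu> by simp
  then obtain \<nu> where "\<nu> \<in> invariant_prob (SFT N M)"
    "\<And>B. B \<in> cylinder_sets (SFT N M) \<Longrightarrow> measure \<nu> B = L B"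
    using invariant_prob_cylinder_limit[of "\<mu> \<circ> r", OF _ L] by metis
  then show thesis using that[OF r(1)] L by auto
qed

lemma bdd_above_measure_invariant_prob: "bdd_above ((\<lambda>\<mu>. measure \<mu> X) ` invariant_prob S)"
proof (rule bdd_aboveI)
  fix y assume "y \<in> (\<lambda>\<mu>. measure \<mu> X) ` invariant_prob S"
  then show "y \<le> 1" using prob_space.prob_le_1[OF invariant_probD(1)] by blast
qed

lemma measure_le_rho: "\<mu> \<in> invariant_prob S \<Longrightarrow> measure \<mu> X \<le> rho S X"
  unfolding rho_def by (rule cSUP_upper[OF _ bdd_above_measure_invariant_prob])

lemma rho_nonneg: "invariant_prob S \<noteq> {} \<Longrightarrow> 0 \<le> rho S X"
proof -
  assume "invariant_prob S \<noteq> {}"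
  then obtain \<mu> where "\<mu> \<in> invariant_prob S" by blast
  then show ?thesis using measure_le_rho[of \<mu> S X] measure_nonneg[of \<mu> X] by linarith
qed

lemma less_rho_iff:
  "invariant_prob S \<noteq> {} \<Longrightarrow> c < rho S X \<longleftrightarrow> (\<exists>\<mu>\<in>invariant_prob S. c < measure \<mu> X)"
  unfolding rho_def by (rule less_cSUP_iff[OF _ bdd_above_measure_invariant_prob])

lemma rho_decseq_cylinder_sets_tendsto_zero:
  assumes nonempty: "invariant_prob (SFT N M) \<noteq> {}"
    and D: "range D \<subseteq> cylinder_sets (SFT N M)" "decseq D"
    and null: "\<And>\<nu>. \<nu> \<in> invariant_prob (SFT N M) \<Longrightarrow> measure \<nu> (\<Inter>k. D k) = 0"
  shows "(\<lambda>m. rho (SFT N M) (D m)) \<longlonglongrightarrow> 0"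
proof (rule ccontr)
  have D_in_sets: "D k \<in> sets \<mu>" if "\<mu> \<in> invariant_prob (SFT N M)" for \<mu> k
    using D(1) cylinder_sets_in_borel invariant_probD(3)[OF that] by auto
  have D_mono: "measure \<mu> (D n) \<le> measure \<mu> (D k)"
    if "\<mu> \<in> invariant_prob (SFT N M)" "k \<le> n" for \<mu> k n
    using finite_measure.finite_measure_mono[OF finite_measure_invariant_prob[OF that(1)]]
      D(2) D_in_sets[OF that(1)] that(2)
    by (simp add: decseq_def)
  assume "\<not> (\<lambda>m. rho (SFT N M) (D m)) \<longlonglongrightarrow> 0"
  then obtain \<epsilon> where \<epsilon>: "\<epsilon> > 0" "\<And>k. \<exists>n\<ge>k. \<epsilon> \<le> rho (SFT N M) (D n)"
    unfolding lim_sequentially dist_real_def using rho_nonneg[OF nonempty]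
    by (metis abs_of_nonneg diff_zero not_less)
  have "\<exists>\<mu>\<in>invariant_prob (SFT N M). \<epsilon> / 2 < measure \<mu> (D k)" for k
  proof -
    obtain n where n: "k \<le> n" "\<epsilon> \<le> rho (SFT N M) (D n)" using \<epsilon>(2) by blast
    then have "\<epsilon> / 2 < rho (SFT N M) (D n)" using \<epsilon>(1) by linarith
    then have "\<exists>\<mu>\<in>invariant_prob (SFT N M). \<epsilon> / 2 < measure \<mu> (D n)"
      by (simp only: less_rho_iff[OF nonempty])
    then obtain \<mu> where \<mu>: "\<mu> \<in> invariant_prob (SFT N M)" "\<epsilon> / 2 < measure \<mu> (D n)" ..
    then have "\<epsilon> / 2 < measure \<mu> (D k)" using D_mono[OF \<mu>(1) n(1)] by linarith
    with \<mu>(1) show ?thesis ..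
  qed
  then obtain \<mu> where \<mu>: "\<And>k. \<mu> k \<in> invariant_prob (SFT N M)" "\<And>k. \<epsilon> / 2 < measure (\<mu> k) (D k)"
    by metis
  obtain r :: "nat \<Rightarrow> nat" and \<nu> where r: "strict_mono r" and \<nu>: "\<nu> \<in> invariant_prob (SFT N M)"
    and lim: "\<And>B. B \<in> cylinder_sets (SFT N M) \<Longrightarrow> (\<lambda>j. measure (\<mu> (r j)) B) \<longlonglongrightarrow> measure \<nu> B"
    using invariant_prob_limit_point[of \<mu>, OF \<mu>(1)] by metis
  have bound: "\<epsilon> / 2 \<le> measure \<nu> (D k)" for k
  proof (rule LIMSEQ_le_const[OF lim])
    show "D k \<in> cylinder_sets (SFT N M)" using D(1) by blast
    have "\<epsilon> / 2 \<le> measure (\<mu> (r j)) (D k)" if "k \<le> j" for j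
      using \<mu>(2)[of "r j"] D_mono[OF \<mu>(1)[of "r j"], of k "r j"] seq_suble[OF r, of j] that
      by linarith
    then show "\<exists>N. \<forall>j\<ge>N. \<epsilon> / 2 \<le> measure (\<mu> (r j)) (D k)" by blast
  qed
  have "(\<lambda>k. measure \<nu> (D k)) \<longlonglongrightarrow> measure \<nu> (\<Inter>k. D k)"
    by (rule finite_measure.finite_Lim_measure_decseq[OF finite_measure_invariant_prob[OF \<nu>]])
      (use D_in_sets[OF \<nu>] D(2) in auto)
  then have "\<epsilon> / 2 \<le> measure \<nu> (\<Inter>k. D k)" by (rule LIMSEQ_le_const) (use bound in auto)
  then show False using null[OF \<nu>] \<epsilon>(1) by simp
qed

section \<open>The approximations of A by cylinders\<close>

lemma cylinder_eq_window_class: "cylinder S m x = window_class S m (window m x)"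
  by (simp only: cylinder_def window_class_def window_eq_iff)

lemma mem_cylinder_iff: "y \<in> cylinder S m x \<longleftrightarrow> y \<in> S \<and> window m y = window m x"
  unfolding cylinder_eq_window_class window_class_def by simp

lemma cylinder_eq_if_mem: "y \<in> cylinder S m x \<Longrightarrow> cylinder S m x = cylinder S m y"
  unfolding cylinder_eq_window_class window_class_def by auto

lemma cylinder_self: "x \<in> S \<Longrightarrow> x \<in> cylinder S m x"
  by (simp add: mem_cylinder_iff)

lemma mem_Union_cylinders_iff:
  assumes "x \<in> S"
  shows "x \<in> \<Union>{C. is_cylinder S m C \<and> P C} \<longleftrightarrow> P (cylinder S m x)"
proof
  assume "x \<in> \<Union>{C. is_cylinder S m C \<and> P C}"
  then obtain w where "x \<in> cylinder S m w" "P (cylinder S m w)"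
    unfolding is_cylinder_def by blast
  then show "P (cylinder S m x)" using cylinder_eq_if_mem by metis
next
  assume "P (cylinder S m x)"
  moreover have "x \<in> cylinder S m x" using assms by (rule cylinder_self)
  ultimately show "x \<in> \<Union>{C. is_cylinder S m C \<and> P C}"
    unfolding is_cylinder_def by blast
qed

lemma diff_approx_iff:
  assumes "x \<in> S"
  shows "x \<in> diff_approx S A m \<longleftrightarrow> cylinder S m x \<inter> A \<noteq> {} \<and> \<not> cylinder S m x \<subseteq> A"
  unfolding diff_approx_def outer_approx_def inner_approx_def Diff_iff
    mem_Union_cylinders_iff[OF assms] ..

lemma diff_approx_subset: "diff_approx S A m \<subseteq> S"
  unfolding diff_approx_def outer_approx_def is_cylinder_def cylinder_def by blast

lemma cylinder_antimono: "m \<le> n \<Longrightarrow> cylinder S n x \<subseteq> cylinder S m x"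
  unfolding mem_cylinder_iff subset_iff using window_eq_antimono by blast

lemma determined_by_window_diff_approx: "determined_by_window S m (diff_approx S A m)"
proof (rule determined_by_windowI[OF diff_approx_subset])
  fix x y assume "x \<in> S" "y \<in> S" "window m x = window m y" "x \<in> diff_approx S A m"
  moreover have "cylinder S m x = cylinder S m y"
    using \<open>window m x = window m y\<close> unfolding cylinder_eq_window_class by simp
  ultimately show "y \<in> diff_approx S A m" using diff_approx_iff by metis
qed

lemma decseq_diff_approx: "decseq (diff_approx S A)"
proof (rule decseq_SucI, rule subsetI)
  fix m x assume x: "x \<in> diff_approx S A (Suc m)"
  then have "x \<in> S" using diff_approx_subset by blast
  have sub: "cylinder S (Suc m) x \<subseteq> cylinder S m x" by (rule cylinder_antimono) simp
  have "cylinder S (Suc m) x \<inter> A \<noteq> {}" "\<not> cylinder S (Suc m) x \<subseteq> A"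
    using x diff_approx_iff[OF \<open>x \<in> S\<close>] by blast+
  then have "cylinder S m x \<inter> A \<noteq> {}" "\<not> cylinder S m x \<subseteq> A" using sub by blast+
  then show "x \<in> diff_approx S A m" using diff_approx_iff[OF \<open>x \<in> S\<close>] by blast
qed

lemma cylinder_subset_if_openin:
  assumes "openin (top_of_set S) T" "x \<in> T"
  obtains m where "cylinder S m x \<subseteq> T"
proof -
  obtain U where U: "open U" "T = S \<inter> U" using assms(1) unfolding openin_open by blast
  obtain m where "\<forall>y. window m y = window m x \<longrightarrow> y \<in> U"
    using open_contains_window_class[OF U(1)] assms(2) U(2) by blast
  then have "cylinder S m x \<subseteq> T" unfolding U(2) mem_cylinder_iff subset_iff by blast
  then show thesis by (rule that)
qed

lemma in_closure_of_if_cylinders_meet: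
  assumes "x \<in> S" "\<And>m. cylinder S m x \<inter> B \<noteq> {}"
  shows "x \<in> top_of_set S closure_of B"
  unfolding in_closure_of
proof (intro conjI allI impI)
  show "x \<in> topspace (top_of_set S)" using assms(1) by simp
  fix T assume "x \<in> T \<and> openin (top_of_set S) T"
  then obtain m where "cylinder S m x \<subseteq> T" using cylinder_subset_if_openin by blast
  then show "\<exists>y. y \<in> B \<and> y \<in> T" using assms(2)[of m] by blast
qed

lemma Inter_diff_approx_subset_boundary: "(\<Inter>m. diff_approx S A m) \<subseteq> topo_boundary S A"
proof
  fix x assume x: "x \<in> (\<Inter>m. diff_approx S A m)"
  then have "x \<in> S" using diff_approx_subset by blast
  have "cylinder S m x \<inter> A \<noteq> {} \<and> \<not> cylinder S m x \<subseteq> A" for m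
    using x diff_approx_iff[OF \<open>x \<in> S\<close>] by blast
  moreover have "cylinder S m x \<subseteq> S" for m unfolding mem_cylinder_iff subset_iff by blast
  ultimately have "cylinder S m x \<inter> A \<noteq> {}" "cylinder S m x \<inter> (S - A) \<noteq> {}" for m by blast+
  then show "x \<in> topo_boundary S A"
    unfolding topo_boundary_def using in_closure_of_if_cylinders_meet[OF \<open>x \<in> S\<close>] by blast
qed

lemma topo_boundary_in_borel: "topo_boundary S A \<in> sets (restrict_space borel S)"
proof -
  have "closedin (top_of_set S) (topo_boundary S A)"
    unfolding topo_boundary_def by (intro closedin_Int closedin_closure_of)
  then obtain F where "closed F" "topo_boundary S A = S \<inter> F" unfolding closedin_closed by blast
  then show ?thesis unfolding sets_restrict_space by auto
qed

section \<open>Periodic orbits\<close>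

lemma funpow_shift: "(shift ^^ i) p = (\<lambda>j. p (j + int i))"
  by (induct i) (simp_all add: shift_def add.assoc)

text \<open>A loop w 0 = w n of an admissible word, repeated periodically.\<close>
lemma periodic_point_SFT:
  assumes "N \<ge> 1" "mixing_SFT N M"
  obtains p n where "0 < n" "p \<in> SFT N M" "(shift ^^ n) p = p"
proof -
  obtain K where K: "\<forall>n\<ge>K. \<forall>i\<in>{1..N}. \<forall>j\<in>{1..N}. admissible_path N M n i j"
    using assms(2) unfolding mixing_SFT_def by blast
  define n where "n = Suc K"
  have "admissible_path N M n 1 1" using K assms(1) unfolding n_def by simp
  then obtain w where w: "w 0 = 1" "w n = 1" "\<forall>k\<le>n. w k \<in> {1..N}" "\<forall>k<n. M (w k) (w (Suc k))"
    unfolding admissible_path_def by blast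
  have "0 < n" unfolding n_def by simp
  define p where "p j = w (nat (j mod int n))" for j
  have p_Suc: "p (j + 1) = w (Suc (nat (j mod int n)))" for j
  proof -
    define q where "q = j mod int n"
    have q: "0 \<le> q" "q < int n" unfolding q_def using \<open>0 < n\<close> by simp_all
    have "(j + 1) mod int n = (q + 1) mod int n" unfolding q_def by (simp add: mod_add_left_eq)
    show ?thesis
    proof (cases "q + 1 < int n")
      case True
      then have "nat ((j + 1) mod int n) = Suc (nat q)"
        using \<open>(j + 1) mod int n = (q + 1) mod int n\<close> q by simp
      then show ?thesis unfolding p_def q_def by simp
    next
      case False
      then have "q + 1 = int n" using q by simp
      then have "(j + 1) mod int n = 0" "Suc (nat q) = n"
        using \<open>(j + 1) mod int n = (q + 1) mod int n\<close> q by simp_all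
      then show ?thesis unfolding p_def q_def using w(1,2) by simp
    qed
  qed
  have "p \<in> SFT N M"
    unfolding SFT_def
  proof (intro CollectI allI conjI)
    fix j
    have "nat (j mod int n) < n" using \<open>0 < n\<close> by (simp add: nat_less_iff)
    then show "p j \<in> {1..N}" "M (p j) (p (j + 1))"
      unfolding p_Suc unfolding p_def using w(3,4) by simp_all
  qed
  moreover have "(shift ^^ n) p = p" unfolding funpow_shift p_def by simp
  ultimately show thesis using \<open>0 < n\<close> by (rule that[rotated])
qed

lemma periodic_orbit_invariant_prob:
  assumes shift: "shift \<in> S \<rightarrow> S" and "p \<in> S" "0 < n" and periodic: "(shift ^^ n) p = p"
  shows "distr (measure_pmf (pmf_of_set {..<n})) (restrict_space borel S) (\<lambda>i. (shift ^^ i) p)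
    \<in> invariant_prob S" (is "?\<mu> \<in> _")
proof -
  define P where "P = measure_pmf (pmf_of_set {..<n})"
  have nonempty: "{..<n} \<noteq> {}" using \<open>0 < n\<close> by auto
  define orbit where "orbit i = (shift ^^ i) p" for i
  have orbit_in: "orbit i \<in> S" for i
    unfolding orbit_def by (induct i) (use \<open>p \<in> S\<close> shift in auto)
  have measurable: "orbit \<in> measurable P (restrict_space borel S)"
    unfolding P_def using orbit_in by (simp add: space_restrict_space)
  have space: "space ?\<mu> = S" by (simp add: space_restrict_space)
  have sets: "sets ?\<mu> = sets (restrict_space borel S)" by simp
  have prob: "prob_space ?\<mu>"
    using prob_space.prob_space_distr[OF prob_space_measure_pmf measurable[unfolded P_def]]
    unfolding orbit_def .
  have shift_measurable: "shift \<in> measurable ?\<mu> ?\<mu>"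
    using measurable_shift_restrict_space[OF shift] by simp
  have card_eq: "card ({..<n} \<inter> {i. orbit (Suc i) \<in> B}) = card ({..<n} \<inter> {i. orbit i \<in> B})" for B
  proof -
    define h where "h i = (if orbit i \<in> B then 1 else 0 :: nat)" for i
    have "h n = h 0" unfolding h_def orbit_def using periodic by simp
    then have "(\<Sum>i<n. h (Suc i)) = (\<Sum>i<n. h i)"
      using sum.lessThan_Suc_shift[of h n] sum.lessThan_Suc[of h n] by simp
    then show ?thesis unfolding h_def by (simp add: sum.If_cases Int_def)
  qed
  have "emeasure ?\<mu> (shift -` B \<inter> space ?\<mu>) = emeasure ?\<mu> B" if B: "B \<in> sets ?\<mu>" for B
  proof -
    have "shift -` B \<inter> S \<in> sets (restrict_space borel S)"
      using measurable_sets[OF shift_measurable B] space sets by simp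
    then have "emeasure ?\<mu> (shift -` B \<inter> space ?\<mu>) = emeasure P {i. orbit (Suc i) \<in> B}"
      using emeasure_distr[OF measurable] orbit_in space unfolding P_def orbit_def
      by (simp add: vimage_def Int_def)
    also have "\<dots> = emeasure P {i. orbit i \<in> B}"
      unfolding P_def emeasure_pmf_of_set[OF nonempty finite_lessThan] card_eq ..
    also have "\<dots> = emeasure ?\<mu> B"
      using emeasure_distr[OF measurable] B unfolding P_def orbit_def
      by (simp add: vimage_def)
    finally show ?thesis .
  qed
  then show ?thesis unfolding invariant_prob_def using prob space sets shift_measurable by blast
qed

theorem lemma6p1:
  fixes N :: nat and M :: "nat \<Rightarrow> nat \<Rightarrow> bool" and A :: "(int \<Rightarrow> nat) set"
  assumes "N \<ge> 1"
    and "mixing_SFT N M"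
    and "A \<subseteq> SFT N M"
    and "openin (top_of_set (SFT N M)) A"
    and "\<forall>\<mu>\<in>invariant_prob (SFT N M). measure \<mu> (topo_boundary (SFT N M) A) = 0"
  shows "(\<lambda>m. rho (SFT N M) (diff_approx (SFT N M) A m)) \<longlonglongrightarrow> 0"
proof (rule rho_decseq_cylinder_sets_tendsto_zero)
  have shift: "shift \<in> SFT N M \<rightarrow> SFT N M" using shift_in_SFT by blast
  obtain p n where "0 < n" "p \<in> SFT N M" "(shift ^^ n) p = p"
    using periodic_point_SFT[OF assms(1,2)] by blast
  then show "invariant_prob (SFT N M) \<noteq> {}"
    using periodic_orbit_invariant_prob[OF shift] by blast
  show "range (diff_approx (SFT N M) A) \<subseteq> cylinder_sets (SFT N M)"
    unfolding cylinder_sets_def using determined_by_window_diff_approx by blast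
  show "decseq (diff_approx (SFT N M) A)" by (rule decseq_diff_approx)
  fix \<nu> assume \<nu>: "\<nu> \<in> invariant_prob (SFT N M)"
  have "measure \<nu> (\<Inter>m. diff_approx (SFT N M) A m) \<le> measure \<nu> (topo_boundary (SFT N M) A)"
    using Inter_diff_approx_subset_boundary topo_boundary_in_borel invariant_probD(3)[OF \<nu>]
    by (intro finite_measure.finite_measure_mono[OF finite_measure_invariant_prob[OF \<nu>]]) auto
  then show "measure \<nu> (\<Inter>m. diff_approx (SFT N M) A m) = 0"
    using assms(5) \<nu> measure_nonneg[of \<nu>] by (metis order_antisym)
qed

end
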